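(* There is a universal constant $c_{\mathrm{var}}>0$ such that for all $d,n\ge1$, $C_{\mathsf{MSE}}>0$, and every measurable $f\colon(\mathbb R^d)^n\to\mathbb R^d$ with \[\sup_{\mu\in\mathbb R^d}\mathbb E_{X\sim\mathcal N(\mu,\mathbb I_d)^{\otimes n}}\|f(X)-\mu\|_2^2\le C_{\mathsf{MSE}}\frac dn,\] there exists $\mu^*\in\mathbb R^d$ such that $\mathrm{Var}_{\mu^*}(f)\ge c_{\mathrm{var}}\frac dn$.
   Context: $\mathrm{Var}_\mu(f)=\mathbb E_X\|f(X)-\mathbb E_Xf(X)\|_2^2$ for $X\sim\mathcal N(\mu,\mathbb I_d)^{\otimes n}$. *)

theory Defs
  imports "HOL-Probability.Probability"
begin

text \<open>Points of (R^d)^n are represented as X :: nat => nat => real, where X j i is the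
  i-th coordinate (i < d) of the j-th sample (j < n).  Vectors in R^d are nat => real,
  only indices i < d being relevant.\<close>

definition gauss_sample :: "nat \<Rightarrow> nat \<Rightarrow> (nat \<Rightarrow> real) \<Rightarrow> (nat \<Rightarrow> nat \<Rightarrow> real) measure" where
  "gauss_sample d n \<mu> =
     PiM {..<n} (\<lambda>_. PiM {..<d} (\<lambda>i. density lborel (normal_density (\<mu> i) 1)))"

definition sample_space_borel :: "nat \<Rightarrow> nat \<Rightarrow> (nat \<Rightarrow> nat \<Rightarrow> real) measure" where
  "sample_space_borel d n = PiM {..<n} (\<lambda>_. PiM {..<d} (\<lambda>_. lborel))"

definition mse :: "nat \<Rightarrow> nat \<Rightarrow> ((nat \<Rightarrow> nat \<Rightarrow> real) \<Rightarrow> nat \<Rightarrow> real) \<Rightarrow> (nat \<Rightarrow> real) \<Rightarrow> ennreal" where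
  "mse d n f \<mu> = (\<integral>\<^sup>+ X. ennreal (\<Sum>i<d. (f X i - \<mu> i)\<^sup>2) \<partial>gauss_sample d n \<mu>)"

definition var_est :: "nat \<Rightarrow> nat \<Rightarrow> ((nat \<Rightarrow> nat \<Rightarrow> real) \<Rightarrow> nat \<Rightarrow> real) \<Rightarrow> (nat \<Rightarrow> real) \<Rightarrow> ennreal" where
  "var_est d n f \<mu> = (\<integral>\<^sup>+ X. ennreal (\<Sum>i<d. (f X i - (\<integral> Y. f Y i \<partial>gauss_sample d n \<mu>))\<^sup>2)
       \<partial>gauss_sample d n \<mu>)"

end

(*
  Write m(mu) for the mean of f under N(mu, I_d)^n.  The MSE bound keeps m(mu) - mu uniformly
  bounded, so averaging the coordinate increments m_i(mu + delta e_i) - m_i(mu) over a fine grid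
  of points mu yields a point at which their sum is at least d delta / 2.  On the other hand, the
  Hammersley-Chapman-Robbins bound controls each increment by the variance of f_i at mu and the
  chi-square divergence exp(n delta^2) - 1 between N(mu + delta e_i, I_d)^n and N(mu, I_d)^n.
  For delta = 1 / sqrt n the two estimates combine to Var_mu(f) >= d / (8 n).
*)

theory Submission
  imports Defs
begin

lemma prod_indicator_eq_indicator_PiE:
  assumes "finite I" "x \<in> extensional I"
  shows "(\<Prod>i\<in>I. indicator (A i) (x i) :: ennreal) = indicator (PiE I A) x"
  using assms by (auto simp: indicator_def PiE_iff extensional_def)

lemma density_PiM_prod:
  fixes g :: "'i \<Rightarrow> 'a \<Rightarrow> ennreal"
  assumes I: "finite I" and sf_M: "\<And>i. sigma_finite_measure (M i)"
    and sf_density: "\<And>i. sigma_finite_measure (density (M i) (g i))"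
    and g[measurable]: "\<And>i. g i \<in> borel_measurable (M i)"
  shows "density (PiM I M) (\<lambda>x. \<Prod>i\<in>I. g i (x i)) = PiM I (\<lambda>i. density (M i) (g i))"
proof -
  interpret D: product_sigma_finite "\<lambda>i. density (M i) (g i)"
    by (simp add: product_sigma_finite_def sf_density)
  interpret M: product_sigma_finite M
    by (simp add: product_sigma_finite_def sf_M)
  show ?thesis
  proof (rule D.PiM_eqI[OF I])
    show "sets (density (PiM I M) (\<lambda>x. \<Prod>i\<in>I. g i (x i))) = sets (PiM I (\<lambda>i. density (M i) (g i)))"
      unfolding sets_density by (intro sets_PiM_cong) simp_all
  next
    fix A assume "\<And>i. i \<in> I \<Longrightarrow> A i \<in> sets (density (M i) (g i))"
    then have A: "\<And>i. i \<in> I \<Longrightarrow> A i \<in> sets (M i)" by simp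
    have "(\<lambda>x. \<Prod>i\<in>I. g i (x i)) \<in> borel_measurable (PiM I M)" by measurable
    moreover have "PiE I A \<in> sets (PiM I M)" using sets_PiM_I_finite[OF I A] by simp
    ultimately have "emeasure (density (PiM I M) (\<lambda>x. \<Prod>i\<in>I. g i (x i))) (PiE I A)
        = (\<integral>\<^sup>+ x. (\<Prod>i\<in>I. g i (x i)) * indicator (PiE I A) x \<partial>PiM I M)"
      by (rule emeasure_density)
    also have "\<dots> = (\<integral>\<^sup>+ x. (\<Prod>i\<in>I. g i (x i) * indicator (A i) (x i)) \<partial>PiM I M)"
    proof (rule nn_integral_cong)
      fix x assume "x \<in> space (PiM I M)"
      then have "x \<in> extensional I" by (simp add: space_PiM PiE_iff)
      then show "(\<Prod>i\<in>I. g i (x i)) * indicator (PiE I A) x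
          = (\<Prod>i\<in>I. g i (x i) * indicator (A i) (x i))"
        by (simp add: prod.distrib prod_indicator_eq_indicator_PiE[OF I])
    qed
    also have "\<dots> = (\<Prod>i\<in>I. \<integral>\<^sup>+ y. g i y * indicator (A i) y \<partial>M i)"
    proof (rule M.product_nn_integral_prod[OF I])
      fix i assume "i \<in> I"
      then have [measurable]: "A i \<in> sets (M i)" by (rule A)
      show "(\<lambda>y. g i y * indicator (A i) y) \<in> borel_measurable (M i)" by measurable
    qed
    also have "\<dots> = (\<Prod>i\<in>I. emeasure (density (M i) (g i)) (A i))"
      by (intro prod.cong refl) (simp add: emeasure_density A)
    finally show "emeasure (density (PiM I M) (\<lambda>x. \<Prod>i\<in>I. g i (x i))) (PiE I A)
        = (\<Prod>i\<in>I. emeasure (density (M i) (g i)) (A i))" .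
  qed
qed

section \<open>Square-integrable random variables\<close>

lemma (in finite_measure) integrable_square_shift:
  fixes g :: "'a \<Rightarrow> real"
  assumes "g \<in> borel_measurable M" "integrable M (\<lambda>x. (g x)\<^sup>2)"
  shows "integrable M (\<lambda>x. (g x + c)\<^sup>2)"
proof -
  have "integrable M g" using assms by (rule square_integrable_imp_integrable)
  with assms(2) show ?thesis
    unfolding power2_sum
    by (intro Bochner_Integration.integrable_add integrable_mult_left integrable_mult_right) simp_all
qed

lemma (in prob_space) mean_deviation_square_le:
  fixes g :: "'a \<Rightarrow> real"
  assumes "g \<in> borel_measurable M" "integrable M (\<lambda>x. (g x - c)\<^sup>2)"
  shows "(expectation g - c)\<^sup>2 \<le> expectation (\<lambda>x. (g x - c)\<^sup>2)"
proof -
  have "integrable M (\<lambda>x. g x - c)"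
    by (rule square_integrable_imp_integrable) (use assms in simp_all)
  then have "integrable M g" "expectation (\<lambda>x. g x - c) = expectation g - c"
    using Bochner_Integration.integrable_add[of M "\<lambda>x. g x - c" "\<lambda>_. c"] by (simp_all add: prob_space)
  with assms(2) variance_eq[of "\<lambda>x. g x - c"] variance_positive[of g]
  show ?thesis by simp
qed

lemma abs_mult_le_half_sum_squares: "\<bar>a * b\<bar> \<le> (a\<^sup>2 + b\<^sup>2) / (2 :: real)"
  using sum_squares_bound[of "\<bar>a\<bar>" "\<bar>b\<bar>"] by (simp add: abs_mult)

text \<open>The bound (E_N h - E_M h)^2 <= Var_M h * chi^2(N, M) for the measure N with density L
  against M, in the linear form given by AM-GM with a free weight l.\<close>

lemma (in prob_space) hammersley_chapman_robbins:
  fixes h L :: "'a \<Rightarrow> real"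
  assumes hm: "h \<in> borel_measurable M" and Lm: "L \<in> borel_measurable M"
    and h2: "integrable M (\<lambda>x. (h x)\<^sup>2)" and L2: "integrable M (\<lambda>x. (L x)\<^sup>2)"
    and EL: "expectation L = 1" and l: "0 < l"
  shows "expectation (\<lambda>x. L x * h x) - expectation h
    \<le> (l * variance h + (expectation (\<lambda>x. (L x)\<^sup>2) - 1) / l) / 2"
proof -
  define m where "m = expectation h"
  have h: "integrable M h" using hm h2 by (rule square_integrable_imp_integrable)
  have L: "integrable M L" using Lm L2 by (rule square_integrable_imp_integrable)
  have Lh: "integrable M (\<lambda>x. L x * h x)"
    by (rule Bochner_Integration.integrable_bound[of _ "\<lambda>x. ((L x)\<^sup>2 + (h x)\<^sup>2) / 2"])
      (use L2 h2 Lm hm abs_mult_le_half_sum_squares in auto)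
  have hm2: "integrable M (\<lambda>x. (h x - m)\<^sup>2)"
    using integrable_square_shift[OF hm h2, of "- m"] by simp
  have split_lhs: "(\<lambda>x. (L x - 1) * (h x - m)) = (\<lambda>x. L x * h x - m * L x - h x + m)"
    by (auto simp: fun_eq_iff algebra_simps)
  have split_rhs: "(\<lambda>x. (l * (h x - m)\<^sup>2 + (L x - 1)\<^sup>2 / l) / 2)
      = (\<lambda>x. (l / 2) * (h x - m)\<^sup>2 + (1 / (2 * l)) * ((L x)\<^sup>2 - 2 * L x + 1))"
    using l by (auto simp: fun_eq_iff field_simps power2_eq_square)
  have "(L x - 1) * (h x - m) \<le> (l * (h x - m)\<^sup>2 + (L x - 1)\<^sup>2 / l) / 2" for x
  proof -
    have "0 \<le> (l * (h x - m) - (L x - 1))\<^sup>2 / l" using l by simp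
    also have "\<dots> = l * (h x - m)\<^sup>2 + (L x - 1)\<^sup>2 / l - 2 * ((L x - 1) * (h x - m))"
      using l by (simp add: field_simps power2_eq_square)
    finally show ?thesis by simp
  qed
  then have "expectation (\<lambda>x. (L x - 1) * (h x - m))
      \<le> expectation (\<lambda>x. (l * (h x - m)\<^sup>2 + (L x - 1)\<^sup>2 / l) / 2)"
    by (intro integral_mono) (use Lh L h hm2 L2 in \<open>simp_all add: split_lhs split_rhs\<close>)
  moreover have "expectation (\<lambda>x. (L x - 1) * (h x - m)) = expectation (\<lambda>x. L x * h x) - m"
    unfolding split_lhs using Lh L h EL by (simp add: prob_space m_def)
  moreover have "expectation (\<lambda>x. (l * (h x - m)\<^sup>2 + (L x - 1)\<^sup>2 / l) / 2)
      = (l * variance h + (expectation (\<lambda>x. (L x)\<^sup>2) - 1) / l) / 2"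
    unfolding split_rhs using hm2 L2 L EL l
    by (simp add: prob_space m_def integral_add integral_diff field_simps)
  ultimately show ?thesis by (simp add: m_def)
qed

lemma nn_integral_sum_le_imp_summand:
  fixes g :: "'i \<Rightarrow> 'a \<Rightarrow> real"
  assumes I: "finite I" "i \<in> I" and g[measurable]: "\<And>j. j \<in> I \<Longrightarrow> g j \<in> borel_measurable M"
    and nonneg: "\<And>j x. j \<in> I \<Longrightarrow> 0 \<le> g j x"
    and bound: "(\<integral>\<^sup>+x. ennreal (\<Sum>j\<in>I. g j x) \<partial>M) \<le> ennreal C" and C: "0 \<le> C"
  shows "integrable M (g i)" and "integral\<^sup>L M (g i) \<le> C"
proof -
  have sum_ge0: "0 \<le> (\<Sum>j\<in>I. g j x)" for x by (simp add: nonneg sum_nonneg)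
  have sum_m: "(\<lambda>x. \<Sum>j\<in>I. g j x) \<in> borel_measurable M" by measurable
  have sum_int: "integrable M (\<lambda>x. \<Sum>j\<in>I. g j x)"
    using bound by (intro integrableI_nonneg sum_m AE_I2 sum_ge0) (simp add: le_less_trans)
  have le_sum: "g i x \<le> (\<Sum>j\<in>I. g j x)" for x
    using I by (intro member_le_sum) (simp_all add: nonneg)
  show int: "integrable M (g i)"
    by (rule Bochner_Integration.integrable_bound[OF sum_int])
      (use I nonneg le_sum sum_ge0 in \<open>auto intro!: AE_I2 simp: abs_of_nonneg\<close>)
  have "ennreal (\<integral>x. (\<Sum>j\<in>I. g j x) \<partial>M) \<le> ennreal C"
    using bound by (simp add: nn_integral_eq_integral[OF sum_int] sum_ge0)
  then have "(\<integral>x. (\<Sum>j\<in>I. g j x) \<partial>M) \<le> C" using C by simp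
  moreover have "integral\<^sup>L M (g i) \<le> (\<integral>x. (\<Sum>j\<in>I. g j x) \<partial>M)"
    by (rule integral_mono[OF int sum_int le_sum])
  ultimately show "integral\<^sup>L M (g i) \<le> C" by linarith
qed

section \<open>Averaging over a grid\<close>

lemma exists_ge_average:
  fixes g :: "'a \<Rightarrow> real"
  assumes "finite A" "A \<noteq> {}" "real (card A) * c \<le> sum g A"
  shows "\<exists>x\<in>A. c \<le> g x"
proof (rule ccontr)
  assume "\<not> ?thesis"
  then have "sum g A < real (card A) * c"
    using assms(1,2) by (intro sum_bounded_above_strict) (auto simp: not_le card_gt_0_iff)
  with assms(3) show False by simp
qed

lemma bij_betw_grid_fibration:
  fixes K :: nat
  assumes "i < d"
  shows "bij_betw (\<lambda>(r, k). k(i := r))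
    ({..<K} \<times> {k \<in> {..<d} \<rightarrow>\<^sub>E {..<K}. k i = 0}) ({..<d} \<rightarrow>\<^sub>E {..<K})"
proof (rule bij_betw_byWitness[where f' = "\<lambda>k. (k i, k(i := 0))"])
  show "(\<lambda>(r, k). k(i := r)) ` ({..<K} \<times> {k \<in> {..<d} \<rightarrow>\<^sub>E {..<K}. k i = 0})
      \<subseteq> ({..<d} \<rightarrow>\<^sub>E {..<K})"
    using assms by (auto simp: PiE_iff extensional_def split: if_splits)
  show "(\<lambda>k. (k i, k(i := 0))) ` ({..<d} \<rightarrow>\<^sub>E {..<K})
      \<subseteq> {..<K} \<times> {k \<in> {..<d} \<rightarrow>\<^sub>E {..<K}. k i = 0}"
  proof (rule image_subsetI)
    fix k assume k: "k \<in> {..<d} \<rightarrow>\<^sub>E {..<K}"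
    then have "k i < K" using assms by auto
    with k show "(k i, k(i := 0)) \<in> {..<K} \<times> {k \<in> {..<d} \<rightarrow>\<^sub>E {..<K}. k i = 0}"
      using assms by (auto simp: PiE_iff extensional_def)
  qed
qed auto

lemma grid_sum_increments:
  fixes h :: "(nat \<Rightarrow> nat) \<Rightarrow> real" and K :: nat
  assumes "i < d"
  defines "S \<equiv> {k \<in> {..<d} \<rightarrow>\<^sub>E {..<K}. k i = 0}"
  shows "(\<Sum>k\<in>{..<d} \<rightarrow>\<^sub>E {..<K}. h (k(i := Suc (k i))) - h k)
      = (\<Sum>k\<in>S. h (k(i := K)) - h k)"
    and "card ({..<d} \<rightarrow>\<^sub>E {..<K}) = K * card S"
proof -
  have bij: "bij_betw (\<lambda>(r, k). k(i := r)) ({..<K} \<times> S) ({..<d} \<rightarrow>\<^sub>E {..<K})"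
    unfolding S_def by (rule bij_betw_grid_fibration[OF assms(1)])
  have "(\<Sum>k\<in>{..<d} \<rightarrow>\<^sub>E {..<K}. h (k(i := Suc (k i))) - h k)
      = (\<Sum>(r, k)\<in>{..<K} \<times> S. h (k(i := Suc r)) - h (k(i := r)))"
    by (simp add: sum.reindex_bij_betw[OF bij, symmetric] case_prod_unfold)
  also have "\<dots> = (\<Sum>k\<in>S. \<Sum>r<K. h (k(i := Suc r)) - h (k(i := r)))"
    unfolding sum.cartesian_product[symmetric] by (rule sum.swap)
  also have "\<dots> = (\<Sum>k\<in>S. h (k(i := K)) - h k)"
  proof (rule sum.cong[OF refl])
    fix k assume "k \<in> S"
    then have "k(i := 0) = k" by (simp add: S_def fun_upd_idem)
    then show "(\<Sum>r<K. h (k(i := Suc r)) - h (k(i := r))) = h (k(i := K)) - h k"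
      using sum_lessThan_telescope[of "\<lambda>r. h (k(i := r))" K] by simp
  qed
  finally show "(\<Sum>k\<in>{..<d} \<rightarrow>\<^sub>E {..<K}. h (k(i := Suc (k i))) - h k)
      = (\<Sum>k\<in>S. h (k(i := K)) - h k)" .
  show "card ({..<d} \<rightarrow>\<^sub>E {..<K}) = K * card S"
    using bij_betw_same_card[OF bij] by (simp add: card_cartesian_product)
qed

text \<open>In direction i the increments over the grid delta * {0..<K}^d telescope along each grid
  line to the value of m at the far end minus its value at the near end, which is at least
  K delta - 2 B.\<close>

lemma grid_coordinate_increments_ge:
  fixes m :: "(nat \<Rightarrow> real) \<Rightarrow> nat \<Rightarrow> real" and K :: nat and \<delta> :: real
  assumes i: "i < d" and K: "0 < K" and bounded: "\<And>\<mu>. \<bar>m \<mu> i - \<mu> i\<bar> \<le> B"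
  defines "G \<equiv> {..<d} \<rightarrow>\<^sub>E {..<K}" and "pt \<equiv> \<lambda>k j. \<delta> * real (k j)"
  shows "real (card G) * (\<delta> - 2 * B / real K)
    \<le> (\<Sum>k\<in>G. m ((pt k)(i := pt k i + \<delta>)) i - m (pt k) i)"
proof -
  define S where "S = {k \<in> G. k i = 0}"
  have "real (card G) * (\<delta> - 2 * B / real K) = (\<Sum>k\<in>S. real K * \<delta> - 2 * B)"
    using grid_sum_increments(2)[OF i, of K] K by (simp add: G_def S_def field_simps)
  also have "\<dots> \<le> (\<Sum>k\<in>S. m (pt (k(i := K))) i - m (pt k) i)"
  proof (rule sum_mono)
    fix k assume "k \<in> S"
    then have "pt k i = 0" "pt (k(i := K)) i = real K * \<delta>" by (simp_all add: S_def pt_def)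
    then show "real K * \<delta> - 2 * B \<le> m (pt (k(i := K))) i - m (pt k) i"
      using bounded[of "pt k"] bounded[of "pt (k(i := K))"] by linarith
  qed
  also have "\<dots> = (\<Sum>k\<in>G. m (pt (k(i := Suc (k i)))) i - m (pt k) i)"
    using grid_sum_increments(1)[OF i, of "\<lambda>k. m (pt k) i" K] by (simp add: G_def S_def)
  also have "\<dots> = (\<Sum>k\<in>G. m ((pt k)(i := pt k i + \<delta>)) i - m (pt k) i)"
    by (intro sum.cong refl arg_cong2[where f = "(-)"] arg_cong2[where f = m])
      (auto simp: pt_def fun_eq_iff algebra_simps)
  finally show ?thesis .
qed

lemma exists_large_coordinate_increments:
  fixes m :: "(nat \<Rightarrow> real) \<Rightarrow> nat \<Rightarrow> real"
  assumes bounded: "\<And>\<mu> i. i < d \<Longrightarrow> \<bar>m \<mu> i - \<mu> i\<bar> \<le> B" and "0 < \<epsilon>"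
  shows "\<exists>\<mu>. real d * (\<delta> - \<epsilon>) \<le> (\<Sum>i<d. m (\<mu>(i := \<mu> i + \<delta>)) i - m \<mu> i)"
proof (cases "d = 0")
  case False
  then have "0 \<le> B" by (intro order_trans[OF abs_ge_zero bounded[of 0]]) simp
  obtain K :: nat where K: "2 * B / \<epsilon> < real K" using reals_Archimedean2 by blast
  moreover have "0 \<le> 2 * B / \<epsilon>" using \<open>0 \<le> B\<close> \<open>0 < \<epsilon>\<close> by simp
  ultimately have "0 < K" by linarith
  have "2 * B / real K \<le> \<epsilon>"
    using K \<open>0 < K\<close> \<open>0 < \<epsilon>\<close> by (simp add: field_simps)
  define G where "G = {..<d} \<rightarrow>\<^sub>E {..<K}"
  define pt where "pt k = (\<lambda>j. \<delta> * real (k j))" for k :: "nat \<Rightarrow> nat"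
  define D where "D k = (\<Sum>i<d. m ((pt k)(i := pt k i + \<delta>)) i - m (pt k) i)" for k
  have "real (card G) * (real d * (\<delta> - \<epsilon>)) = (\<Sum>i<d. real (card G) * (\<delta> - \<epsilon>))"
    by simp
  also have "\<dots> \<le> (\<Sum>i<d. real (card G) * (\<delta> - 2 * B / real K))"
    using \<open>2 * B / real K \<le> \<epsilon>\<close> by (intro sum_mono mult_left_mono) simp_all
  also have "\<dots> \<le> (\<Sum>i<d. \<Sum>k\<in>G. m ((pt k)(i := pt k i + \<delta>)) i - m (pt k) i)"
    unfolding G_def pt_def using \<open>0 < K\<close> bounded
    by (intro sum_mono grid_coordinate_increments_ge) auto
  also have "\<dots> = sum D G"
    unfolding D_def by (rule sum.swap)
  finally have "real (card G) * (real d * (\<delta> - \<epsilon>)) \<le> sum D G" .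
  moreover have "finite G" "G \<noteq> {}"
    using \<open>0 < K\<close> by (auto simp: G_def PiE_eq_empty_iff intro!: finite_PiE)
  ultimately obtain k where "real d * (\<delta> - \<epsilon>) \<le> D k"
    using exists_ge_average by blast
  then show ?thesis unfolding D_def by blast
qed simp

section \<open>The Gaussian location model\<close>

definition gauss_likelihood :: "nat \<Rightarrow> nat \<Rightarrow> (nat \<Rightarrow> real) \<Rightarrow> (nat \<Rightarrow> nat \<Rightarrow> real) \<Rightarrow> real" where
  "gauss_likelihood d n \<mu> X = (\<Prod>j<n. \<Prod>i<d. normal_density (\<mu> i) 1 (X j i))"

lemma sigma_finite_PiM_lborel:
  "finite I \<Longrightarrow> sigma_finite_measure (PiM I (\<lambda>_. lborel :: real measure))"
proof -
  assume "finite I"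
  then interpret finite_product_sigma_finite "\<lambda>_. lborel :: real measure" I
    by (simp add: finite_product_sigma_finite_def product_sigma_finite_def sigma_finite_lborel
        finite_product_sigma_finite_axioms_def)
  show ?thesis unfolding sigma_finite_measure_def by (rule sigma_finite_countable)
qed

lemma PiM_normal_density_eq_density:
  "PiM {..<d::nat} (\<lambda>i. density lborel (normal_density (\<mu> i) 1)) =
   density (PiM {..<d} (\<lambda>_. lborel)) (\<lambda>x. ennreal (\<Prod>i<d. normal_density (\<mu> i) 1 (x i)))"
proof -
  have "density (PiM {..<d} (\<lambda>_. lborel)) (\<lambda>x. \<Prod>i<d. ennreal (normal_density (\<mu> i) 1 (x i)))
      = PiM {..<d} (\<lambda>i. density lborel (normal_density (\<mu> i) 1))"
    by (rule density_PiM_prod)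
      (auto simp: sigma_finite_lborel prob_space_imp_sigma_finite prob_space_normal_density)
  then show ?thesis by (simp add: prod_ennreal)
qed

lemma prob_space_PiM_normal_density:
  "prob_space (PiM {..<d::nat} (\<lambda>i. density lborel (normal_density (\<mu> i) 1)))"
  by (rule prob_space_PiM) (auto intro: prob_space_normal_density)

lemma prob_space_gauss_sample: "prob_space (gauss_sample d n \<mu>)"
  unfolding gauss_sample_def by (rule prob_space_PiM) (rule prob_space_PiM_normal_density)

lemma gauss_sample_eq_density:
  "gauss_sample d n \<mu> = density (sample_space_borel d n) (\<lambda>X. ennreal (gauss_likelihood d n \<mu> X))"
proof -
  let ?q = "\<lambda>x. ennreal (\<Prod>i<d. normal_density (\<mu> i) 1 (x i))"
  have qm: "?q \<in> borel_measurable (PiM {..<d} (\<lambda>_. lborel))" by measurable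
  have "density (PiM {..<n} (\<lambda>_. PiM {..<d} (\<lambda>_. lborel))) (\<lambda>X. \<Prod>j<n. ?q (X j))
      = PiM {..<n} (\<lambda>_. density (PiM {..<d} (\<lambda>_. lborel)) ?q)"
    by (rule density_PiM_prod) (auto simp: sigma_finite_PiM_lborel prob_space_imp_sigma_finite
         PiM_normal_density_eq_density[symmetric] prob_space_PiM_normal_density qm)
  moreover have "(\<lambda>X. \<Prod>j<n. ?q (X j)) = (\<lambda>X. ennreal (gauss_likelihood d n \<mu> X))"
    by (simp add: prod_ennreal gauss_likelihood_def prod_nonneg)
  ultimately show ?thesis
    unfolding gauss_sample_def sample_space_borel_def PiM_normal_density_eq_density by simp
qed

lemma measurable_sample_coordinate:
  assumes "j \<in> J" "i \<in> I"
  shows "(\<lambda>X. X j i) \<in> borel_measurable (PiM J (\<lambda>_. PiM I (\<lambda>_. lborel)))"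
  using measurable_compose[OF measurable_component_singleton[OF assms(1), of "\<lambda>_. PiM I (\<lambda>_. lborel)"]
    measurable_component_singleton[OF assms(2), of "\<lambda>_. lborel"]]
  by (simp add: measurable_lborel1)

lemma gauss_likelihood_measurable[measurable]:
  "gauss_likelihood d n \<mu> \<in> borel_measurable (sample_space_borel d n)"
  unfolding gauss_likelihood_def[abs_def] sample_space_borel_def
  by (intro borel_measurable_prod)
    (auto intro: measurable_compose[OF measurable_sample_coordinate borel_measurable_normal_density])

lemma gauss_likelihood_nonneg: "0 \<le> gauss_likelihood d n \<mu> X"
  unfolding gauss_likelihood_def by (intro prod_nonneg) auto

lemma sets_gauss_sample: "sets (gauss_sample d n \<mu>) = sets (sample_space_borel d n)"
  by (simp add: gauss_sample_eq_density)

lemma measurable_gauss_sample_iff[simp]: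
  "h \<in> borel_measurable (gauss_sample d n \<mu>) \<longleftrightarrow> h \<in> borel_measurable (sample_space_borel d n)"
  by (simp only: measurable_cong_sets[OF sets_gauss_sample refl])

lemma integrable_gauss_sample_iff:
  fixes b :: "(nat \<Rightarrow> nat \<Rightarrow> real) \<Rightarrow> real"
  assumes "b \<in> borel_measurable (sample_space_borel d n)"
  shows "integrable (gauss_sample d n \<mu>) b
    \<longleftrightarrow> integrable (sample_space_borel d n) (\<lambda>X. gauss_likelihood d n \<mu> X * b X)"
  unfolding gauss_sample_eq_density
  by (subst integrable_density) (simp_all add: assms gauss_likelihood_nonneg)

lemma integral_gauss_sample:
  fixes b :: "(nat \<Rightarrow> nat \<Rightarrow> real) \<Rightarrow> real"
  assumes "b \<in> borel_measurable (sample_space_borel d n)"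
  shows "(\<integral>X. b X \<partial>gauss_sample d n \<mu>)
    = (\<integral>X. gauss_likelihood d n \<mu> X * b X \<partial>sample_space_borel d n)"
  unfolding gauss_sample_eq_density
  by (subst integral_density) (simp_all add: assms gauss_likelihood_nonneg)

lemma normal_density_shift:
  "normal_density (m + t) 1 x = normal_density m 1 x * exp (t * (x - m) - t\<^sup>2 / 2)"
proof -
  have "- (x - (m + t))\<^sup>2 / (2 * 1\<^sup>2) = - (x - m)\<^sup>2 / (2 * 1\<^sup>2) + (t * (x - m) - t\<^sup>2 / 2)"
    by (simp add: power2_eq_square field_simps)
  then have "exp (- (x - (m + t))\<^sup>2 / (2 * 1\<^sup>2))
      = exp (- (x - m)\<^sup>2 / (2 * 1\<^sup>2)) * exp (t * (x - m) - t\<^sup>2 / 2)"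
    by (simp only: exp_add)
  then show ?thesis unfolding normal_density_def by simp
qed

definition gauss_shift_ratio :: "nat \<Rightarrow> nat \<Rightarrow> real \<Rightarrow> (nat \<Rightarrow> real) \<Rightarrow> (nat \<Rightarrow> nat \<Rightarrow> real) \<Rightarrow> real" where
  "gauss_shift_ratio n i t \<mu> X = exp (t * (\<Sum>j<n. X j i - \<mu> i) - real n * t\<^sup>2 / 2)"

lemma gauss_likelihood_shift:
  assumes "i < d"
  shows "gauss_likelihood d n (\<mu>(i := \<mu> i + t)) X
    = gauss_likelihood d n \<mu> X * gauss_shift_ratio n i t \<mu> X"
proof -
  have "(\<Prod>l<d. normal_density ((\<mu>(i := \<mu> i + t)) l) 1 (X j l))
      = (\<Prod>l<d. normal_density (\<mu> l) 1 (X j l)) * exp (t * (X j i - \<mu> i) - t\<^sup>2 / 2)" for j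
    using assms by (simp add: prod.remove[of "{..<d}" i] normal_density_shift)
  moreover have "gauss_shift_ratio n i t \<mu> X = (\<Prod>j<n. exp (t * (X j i - \<mu> i) - t\<^sup>2 / 2))"
    by (simp add: gauss_shift_ratio_def exp_sum[symmetric] sum_subtractf
        right_diff_distrib sum_distrib_left)
  ultimately show ?thesis
    by (simp add: gauss_likelihood_def prod.distrib)
qed

lemma gauss_shift_ratio_square:
  "(gauss_shift_ratio n i t \<mu> X)\<^sup>2 = gauss_shift_ratio n i (2 * t) \<mu> X * exp (real n * t\<^sup>2)"
  by (simp add: gauss_shift_ratio_def power2_eq_square exp_add[symmetric] algebra_simps)

lemma gauss_shift_ratio_measurable[measurable]:
  "i < d \<Longrightarrow> gauss_shift_ratio n i t \<mu> \<in> borel_measurable (sample_space_borel d n)"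
  unfolding gauss_shift_ratio_def[abs_def] sample_space_borel_def
  by (intro measurable_compose[OF _ borel_measurable_exp] borel_measurable_diff
      borel_measurable_times borel_measurable_sum measurable_sample_coordinate) auto

lemma gauss_sample_shift_integral:
  fixes b :: "(nat \<Rightarrow> nat \<Rightarrow> real) \<Rightarrow> real"
  assumes i: "i < d" and b[measurable]: "b \<in> borel_measurable (sample_space_borel d n)"
    and int: "integrable (gauss_sample d n (\<mu>(i := \<mu> i + t))) b"
  shows "integrable (gauss_sample d n \<mu>) (\<lambda>X. gauss_shift_ratio n i t \<mu> X * b X)"
    and "(\<integral>X. gauss_shift_ratio n i t \<mu> X * b X \<partial>gauss_sample d n \<mu>)
      = (\<integral>X. b X \<partial>gauss_sample d n (\<mu>(i := \<mu> i + t)))"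
proof -
  have [measurable]:
    "(\<lambda>X. gauss_shift_ratio n i t \<mu> X * b X) \<in> borel_measurable (sample_space_borel d n)"
    using i by measurable
  have eq: "gauss_likelihood d n \<mu> X * (gauss_shift_ratio n i t \<mu> X * b X)
      = gauss_likelihood d n (\<mu>(i := \<mu> i + t)) X * b X" for X
    by (simp add: gauss_likelihood_shift[OF i])
  show "integrable (gauss_sample d n \<mu>) (\<lambda>X. gauss_shift_ratio n i t \<mu> X * b X)"
    using int by (simp add: integrable_gauss_sample_iff eq)
  show "(\<integral>X. gauss_shift_ratio n i t \<mu> X * b X \<partial>gauss_sample d n \<mu>)
      = (\<integral>X. b X \<partial>gauss_sample d n (\<mu>(i := \<mu> i + t)))"
    by (simp add: integral_gauss_sample eq)
qed

lemma gauss_shift_ratio_moments: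
  assumes "i < d"
  shows "integrable (gauss_sample d n \<mu>) (\<lambda>X. (gauss_shift_ratio n i t \<mu> X)\<^sup>2)"
    and "(\<integral>X. gauss_shift_ratio n i t \<mu> X \<partial>gauss_sample d n \<mu>) = 1"
    and "(\<integral>X. (gauss_shift_ratio n i t \<mu> X)\<^sup>2 \<partial>gauss_sample d n \<mu>) = exp (real n * t\<^sup>2)"
proof -
  have const: "integrable (gauss_sample d n \<nu>) (\<lambda>_. 1 :: real)"
    "(\<integral>_. 1 \<partial>gauss_sample d n \<nu>) = (1 :: real)" for \<nu>
    by (simp_all add: finite_measure.integrable_const prob_space.finite_measure
        prob_space.prob_space prob_space_gauss_sample)
  have ratio: "integrable (gauss_sample d n \<mu>) (gauss_shift_ratio n i s \<mu>)"
    "(\<integral>X. gauss_shift_ratio n i s \<mu> X \<partial>gauss_sample d n \<mu>) = 1" for s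
    using gauss_sample_shift_integral[OF assms _ const(1)] const(2) by simp_all
  show "(\<integral>X. gauss_shift_ratio n i t \<mu> X \<partial>gauss_sample d n \<mu>) = 1"
    by (rule ratio(2))
  show "integrable (gauss_sample d n \<mu>) (\<lambda>X. (gauss_shift_ratio n i t \<mu> X)\<^sup>2)"
    unfolding gauss_shift_ratio_square using ratio(1)[of "2 * t"] by simp
  show "(\<integral>X. (gauss_shift_ratio n i t \<mu> X)\<^sup>2 \<partial>gauss_sample d n \<mu>) = exp (real n * t\<^sup>2)"
    unfolding gauss_shift_ratio_square using ratio(2)[of "2 * t"] by simp
qed

section \<open>Bias and variance of an estimator\<close>

lemma gauss_mean_shift_le:
  fixes h :: "(nat \<Rightarrow> nat \<Rightarrow> real) \<Rightarrow> real"
  assumes i: "i < d" and l: "0 < l" and h[measurable]: "h \<in> borel_measurable (sample_space_borel d n)"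
    and h2: "integrable (gauss_sample d n \<mu>) (\<lambda>X. (h X)\<^sup>2)"
    and h_shifted: "integrable (gauss_sample d n (\<mu>(i := \<mu> i + t))) h"
  shows "(\<integral>X. h X \<partial>gauss_sample d n (\<mu>(i := \<mu> i + t))) - (\<integral>X. h X \<partial>gauss_sample d n \<mu>)
    \<le> (l * prob_space.variance (gauss_sample d n \<mu>) h + (exp (real n * t\<^sup>2) - 1) / l) / 2"
proof -
  interpret prob_space "gauss_sample d n \<mu>" by (rule prob_space_gauss_sample)
  have "expectation (\<lambda>X. gauss_shift_ratio n i t \<mu> X * h X) - expectation h
      \<le> (l * variance h + (expectation (\<lambda>X. (gauss_shift_ratio n i t \<mu> X)\<^sup>2) - 1) / l) / 2"
    using i by (intro hammersley_chapman_robbins l h2 gauss_shift_ratio_moments)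
      (simp_all add: gauss_shift_ratio_measurable)
  then show ?thesis
    by (simp add: gauss_sample_shift_integral[OF i h h_shifted] gauss_shift_ratio_moments[OF i])
qed

lemma mse_bound_coordinate:
  assumes meas: "\<forall>i<d. (\<lambda>X. f X i) \<in> borel_measurable (sample_space_borel d n)"
    and mse: "mse d n f \<mu> \<le> ennreal C" and C: "0 \<le> C" and i: "i < d"
  shows "integrable (gauss_sample d n \<mu>) (\<lambda>X. (f X i)\<^sup>2)"
    and "\<bar>(\<integral>X. f X i \<partial>gauss_sample d n \<mu>) - \<mu> i\<bar> \<le> sqrt C"
proof -
  interpret prob_space "gauss_sample d n \<mu>" by (rule prob_space_gauss_sample)
  have f: "(\<lambda>X. f X j) \<in> borel_measurable (gauss_sample d n \<mu>)" if "j < d" for j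
    using meas that by simp
  have "(\<lambda>X. (f X j - \<mu> j)\<^sup>2) \<in> borel_measurable (gauss_sample d n \<mu>)" if "j < d" for j
    using f[OF that] by measurable
  then have sq_int: "integrable (gauss_sample d n \<mu>) (\<lambda>X. (f X i - \<mu> i)\<^sup>2)"
    and error_le: "expectation (\<lambda>X. (f X i - \<mu> i)\<^sup>2) \<le> C"
    using nn_integral_sum_le_imp_summand[of "{..<d}" i "\<lambda>j X. (f X j - \<mu> j)\<^sup>2"
        "gauss_sample d n \<mu>" C] mse C i
    by (simp_all add: mse_def)
  have "(\<lambda>X. f X i - \<mu> i) \<in> borel_measurable (gauss_sample d n \<mu>)"
    using f[OF i] by measurable
  with sq_int show "integrable (gauss_sample d n \<mu>) (\<lambda>X. (f X i)\<^sup>2)"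
    using integrable_square_shift[of "\<lambda>X. f X i - \<mu> i" "\<mu> i"] by simp
  have "(expectation (\<lambda>X. f X i) - \<mu> i)\<^sup>2 \<le> C"
    using mean_deviation_square_le[OF f[OF i] sq_int] error_le by linarith
  then show "\<bar>expectation (\<lambda>X. f X i) - \<mu> i\<bar> \<le> sqrt C"
    using real_sqrt_le_mono by fastforce
qed

lemma var_est_eq_sum_variance:
  assumes meas: "\<forall>i<d. (\<lambda>X. f X i) \<in> borel_measurable (sample_space_borel d n)"
    and f2: "\<And>i. i < d \<Longrightarrow> integrable (gauss_sample d n \<mu>) (\<lambda>X. (f X i)\<^sup>2)"
  shows "var_est d n f \<mu> = ennreal (\<Sum>i<d. prob_space.variance (gauss_sample d n \<mu>) (\<lambda>X. f X i))"
proof -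
  interpret prob_space "gauss_sample d n \<mu>" by (rule prob_space_gauss_sample)
  have dev: "integrable (gauss_sample d n \<mu>) (\<lambda>X. (f X i - expectation (\<lambda>X. f X i))\<^sup>2)" if "i < d" for i
    using integrable_square_shift[of "\<lambda>X. f X i" "- expectation (\<lambda>X. f X i)"] meas f2 that by simp
  then have "var_est d n f \<mu>
      = ennreal (expectation (\<lambda>X. \<Sum>i<d. (f X i - expectation (\<lambda>X. f X i))\<^sup>2))"
    unfolding var_est_def by (intro nn_integral_eq_integral AE_I2) (auto intro: sum_nonneg)
  also have "\<dots> = ennreal (\<Sum>i<d. variance (\<lambda>X. f X i))"
    using dev by (subst Bochner_Integration.integral_sum) auto
  finally show ?thesis .
qed

lemma gauss_mean_increment_le:
  assumes meas: "\<forall>i<d. (\<lambda>X. f X i) \<in> borel_measurable (sample_space_borel d n)"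
    and mse: "\<And>\<nu>. mse d n f \<nu> \<le> ennreal C" and C: "0 \<le> C"
    and i: "i < d" and t: "0 < t" "real n * t\<^sup>2 \<le> 1"
  shows "(\<integral>X. f X i \<partial>gauss_sample d n (\<mu>(i := \<mu> i + t))) - (\<integral>X. f X i \<partial>gauss_sample d n \<mu>)
    \<le> 2 * prob_space.variance (gauss_sample d n \<mu>) (\<lambda>X. f X i) / t + t / 4"
proof -
  let ?V = "prob_space.variance (gauss_sample d n \<mu>) (\<lambda>X. f X i)"
  have fi: "(\<lambda>X. f X i) \<in> borel_measurable (sample_space_borel d n)" using meas i by simp
  have "integrable (gauss_sample d n (\<mu>(i := \<mu> i + t))) (\<lambda>X. f X i)"
    by (rule finite_measure.square_integrable_imp_integrable[OF prob_space.finite_measure])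
      (use fi prob_space_gauss_sample mse_bound_coordinate(1)[OF meas mse C i] in auto)
  then have "(\<integral>X. f X i \<partial>gauss_sample d n (\<mu>(i := \<mu> i + t))) - (\<integral>X. f X i \<partial>gauss_sample d n \<mu>)
      \<le> ((4 / t) * ?V + (exp (real n * t\<^sup>2) - 1) / (4 / t)) / 2"
    using t by (intro gauss_mean_shift_le[OF i _ fi] mse_bound_coordinate(1)[OF meas mse C i]) auto
  also have "\<dots> \<le> ((4 / t) * ?V + 2 / (4 / t)) / 2"
  proof -
    have "exp (real n * t\<^sup>2) \<le> exp 1" using t by simp
    then have "exp (real n * t\<^sup>2) - 1 \<le> 2" using exp_le by linarith
    then show ?thesis using t by (intro divide_right_mono add_left_mono) auto
  qed
  also have "\<dots> = 2 * ?V / t + t / 4" using t by (simp add: field_simps)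
  finally show ?thesis .
qed

lemma var_est_ge_of_mean_increments:
  assumes meas: "\<forall>i<d. (\<lambda>X. f X i) \<in> borel_measurable (sample_space_borel d n)"
    and mse: "\<And>\<nu>. mse d n f \<nu> \<le> ennreal C" and C: "0 \<le> C"
    and t: "0 < t" "real n * t\<^sup>2 \<le> 1"
    and increments: "real d * t / 2 \<le> (\<Sum>i<d. (\<integral>X. f X i \<partial>gauss_sample d n (\<mu>(i := \<mu> i + t)))
      - (\<integral>X. f X i \<partial>gauss_sample d n \<mu>))"
  shows "ennreal (real d * t\<^sup>2 / 8) \<le> var_est d n f \<mu>"
proof -
  define V where "V i = prob_space.variance (gauss_sample d n \<mu>) (\<lambda>X. f X i)" for i
  have "real d * t / 2 \<le> (\<Sum>i<d. 2 * V i / t + t / 4)"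
    using increments gauss_mean_increment_le[OF meas mse C _ t] unfolding V_def
    by (meson lessThan_iff order_trans sum_mono)
  also have "\<dots> = 2 * (\<Sum>i<d. V i) / t + real d * t / 4"
    by (simp add: sum.distrib sum_divide_distrib[symmetric] sum_distrib_left[symmetric])
  finally have "real d * t\<^sup>2 / 8 \<le> (\<Sum>i<d. V i)"
    using t by (simp add: field_simps power2_eq_square)
  moreover have "var_est d n f \<mu> = ennreal (\<Sum>i<d. V i)"
    unfolding V_def by (rule var_est_eq_sum_variance[OF meas mse_bound_coordinate(1)[OF meas mse C]])
  ultimately show ?thesis by (simp add: ennreal_leI)
qed

theorem propositionI1:
  shows "\<exists>c_var::real. c_var > 0 \<and>
    (\<forall>(d::nat) (n::nat) (C_MSE::real) (f :: (nat \<Rightarrow> nat \<Rightarrow> real) \<Rightarrow> nat \<Rightarrow> real).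
       d \<ge> 1 \<longrightarrow> n \<ge> 1 \<longrightarrow> C_MSE > 0 \<longrightarrow>
       (\<forall>i<d. (\<lambda>X. f X i) \<in> borel_measurable (sample_space_borel d n)) \<longrightarrow>
       (SUP \<mu>. mse d n f \<mu>) \<le> ennreal (C_MSE * real d / real n) \<longrightarrow>
       (\<exists>\<mu>. var_est d n f \<mu> \<ge> ennreal (c_var * real d / real n)))"
proof (intro exI[of _ "1 / 8"] conjI allI impI)
  fix d n :: nat and C_MSE :: real and f :: "(nat \<Rightarrow> nat \<Rightarrow> real) \<Rightarrow> nat \<Rightarrow> real"
  assume "1 \<le> d" "1 \<le> n" "0 < C_MSE"
    and meas: "\<forall>i<d. (\<lambda>X. f X i) \<in> borel_measurable (sample_space_borel d n)"
    and sup: "(SUP \<mu>. mse d n f \<mu>) \<le> ennreal (C_MSE * real d / real n)"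
  define C where "C = C_MSE * real d / real n"
  define \<delta> where "\<delta> = 1 / sqrt (real n)"
  have C: "0 \<le> C" using \<open>0 < C_MSE\<close> by (simp add: C_def)
  have mse: "mse d n f \<mu> \<le> ennreal C" for \<mu>
    using order_trans[OF SUP_upper[of \<mu> UNIV "mse d n f"] sup] by (simp add: C_def)
  have "0 < \<delta>" and \<delta>2: "\<delta>\<^sup>2 = 1 / real n"
    using \<open>1 \<le> n\<close> by (simp_all add: \<delta>_def power_divide)
  obtain \<mu> where "real d * (\<delta> - \<delta> / 2) \<le> (\<Sum>i<d. (\<integral>X. f X i \<partial>gauss_sample d n (\<mu>(i := \<mu> i + \<delta>)))
      - (\<integral>X. f X i \<partial>gauss_sample d n \<mu>))"
    using exists_large_coordinate_increments[where m = "\<lambda>\<mu> i. \<integral>X. f X i \<partial>gauss_sample d n \<mu>"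
        and d = d and \<epsilon> = "\<delta> / 2" and \<delta> = \<delta>, OF mse_bound_coordinate(2)[OF meas mse C]]
      \<open>0 < \<delta>\<close>
    by auto
  then have "ennreal (real d * \<delta>\<^sup>2 / 8) \<le> var_est d n f \<mu>"
    using \<open>0 < \<delta>\<close> \<open>1 \<le> n\<close> by (intro var_est_ge_of_mean_increments[OF meas mse C]) (simp_all add: \<delta>2)
  then show "\<exists>\<mu>. ennreal (1 / 8 * real d / real n) \<le> var_est d n f \<mu>"
    by (intro exI[of _ \<mu>]) (simp add: \<delta>2 mult.commute)
qed simp

end
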